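(* Call an algebra of a signature $\sigma$ (not containing composition) \emph{representable} if it is isomorphic to a set of partial functions $B\subseteq P(X,Y)$, for some non-empty sets $X,Y$, closed under the operations of $\sigma$, each symbol interpreted by the corresponding concrete operation described in the context. Then: (1) an algebra $(A,\circ,\cap)$ is representable if and only if it is a right normal band with intersection; (2) an algebra $(A,-)$ is representable if and only if, with $x\circ y:=y-(y-x)$, $(A,\circ,-)$ is a minus-algebra; (3) an algebra $(A,-,\sqcup)$ is representable if and only if, with $x\circ y:=y-(y-x)$, it is a minus-algebra with override; (4) an algebra $(A,-,\diamond)$ is representable if and only if, with $x\circ y:=y-(y-x)$, it is a minus-algebra with update; (5) for each of the signatures $(-,\cap)$, $(-,\sqcup,\cap)$, $(-,\diamond,\cap)$, an algebra of that signature is representable if and only if, with $x\circ y:=y-(y-x)$, it satisfies the axioms of, respectively, a minus-algebra, a minus-algebra with override, a minus-algebra with update, and in addition all the axioms of a right normal band with intersection; (6) an algebra $(A,\circ,\cap,\sqcup)$ is representable if and only if it is a right normal band with intersection and override; (7) an algebra $(A,\circ,\cap,\diamond)$ is representable if and only if it is a right normal band with intersection and update.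
   Context: $P(X,Y)$ is the set of all partial functions from $X$ to $Y$ (sets of pairs). Concrete operations for $f,g\in P(X,Y)$: domain restriction $f\circ g$ is $g$ restricted to $\mathrm{dom}(f)$; minus $f-g$ is $f$ restricted to $\mathrm{dom}(f)\setminus\mathrm{dom}(g)$; intersection $f\cap g$ is set intersection; override $f\sqcup g$ equals $f(x)$ on $\mathrm{dom}(f)$, $g(x)$ on $\mathrm{dom}(g)\setminus\mathrm{dom}(f)$, undefined elsewhere; update $f\diamond g$ is $g\sqcup f$ restricted to $\mathrm{dom}(f)$. A right normal band is a semigroup $(A,\circ)$ with $x\circ x=x$ and $(x\circ y)\circ z=(y\circ x)\circ z$. A right normal band with intersection $(A,\circ,\cap)$: $(A,\circ)$ a right normal band, $(A,\cap)$ a semilattice, $(x\cap y)\circ x=x\cap y$, $x\circ(y\cap z)=(x\circ y)\cap z$. A minus-algebra $(A,\circ,-)$ satisfies: $x\circ y=y-(y-x)$; $(A,\circ)$ is a right normal band; there is $0$ with $x-x=0$ for all $x$; $x\circ0=0\circ x=0$; $(x-y)\circ x=x-y$; $(x-y)\circ y=0$; $(x-y)\circ z=(x\circ z)-y$; and the quasi-identity $s-x=t-x\ \&\ x\circ s=x\circ t\Rightarrow s=t$. A minus-algebra with override is a minus-algebra with a binary operation $\sqcup$ satisfying $(x\sqcup y)-x=y-x$ and $x\circ(x\sqcup y)=x$. A minus-algebra with update is a minus-algebra with a binary operation $\diamond$ satisfying $(x\diamond y)-x=x-(x\diamond y)=0$, $((x\diamond y)-y)\circ x=(x\diamond y)-y$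 and $x\circ y=y\circ(x\diamond y)$. A right normal band with intersection and override $(A,\circ,\cap,\sqcup)$: a right normal band with intersection satisfying $s\circ(s\sqcup t)=s$, $((s\sqcup t)\cap t)\sqcup s=s\sqcup t$, $(s\sqcup t)\circ u=(s\circ u)\sqcup(t\circ u)$. A right normal band with intersection and update $(A,\circ,\cap,\diamond)$: a right normal band with intersection satisfying $s=(s\diamond t)\circ s$, $s\diamond t=s\diamond(s\diamond t)$, $s\circ t=t\circ(s\diamond t)$ and the quasi-identity $(x\cap(x\diamond y))\circ a=(x\cap(x\diamond y))\circ b\ \&\ y\circ a=y\circ b\Rightarrow x\circ a=x\circ b$. *)

theory Defs
  imports Main
begin

text \<open>A partial function from X to Y is modelled as a map 'x \<rightharpoonup> 'y whose
domain lies in X and whose range lies in Y.\<close>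

datatype pfop = PRes | PMinus | PInter | POvr | PUpd

text \<open>PRes: f \<circ> g = g restricted to dom f;  PMinus: f - g = f restricted to
dom f \ dom g;  PInter: set intersection of graphs;  POvr: f \<squnion> g
(f takes priority);  PUpd: f \<diamond> g = (g \<squnion> f) restricted to dom f.\<close>

fun pf_op :: "pfop \<Rightarrow> ('x \<rightharpoonup> 'y) \<Rightarrow> ('x \<rightharpoonup> 'y) \<Rightarrow> ('x \<rightharpoonup> 'y)" where
  "pf_op PRes f g = g |` dom f"
| "pf_op PMinus f g = f |` (dom f - dom g)"
| "pf_op PInter f g = (\<lambda>x. if f x = g x then f x else None)"
| "pf_op POvr f g = g ++ f"
| "pf_op PUpd f g = (f ++ g) |` dom f"

text \<open>An algebra on the type 'a with the listed binary operations (each tagged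
with the concrete operation that interprets it) is representable over
point type 'x and value type 'y if it is isomorphic (via h) to a set of
partial functions from some non-empty X :: 'x set to some non-empty
Y :: 'y set, closed under the operations (closure of the image of h is
implied by h being a homomorphism).\<close>

definition representable_in ::
  "'x itself \<Rightarrow> 'y itself \<Rightarrow> (pfop \<times> ('a \<Rightarrow> 'a \<Rightarrow> 'a)) list \<Rightarrow> bool" where
  "representable_in _ _ ops \<longleftrightarrow>
     (\<exists>(X::'x set) (Y::'y set) (h::'a \<Rightarrow> ('x \<rightharpoonup> 'y)).
        X \<noteq> {} \<and> Y \<noteq> {} \<and> inj h \<and>
        (\<forall>a. dom (h a) \<subseteq> X \<and> ran (h a) \<subseteq> Y) \<and>
        (\<forall>(s, f) \<in> set ops. \<forall>a b. h (f a b) = pf_op s (h a) (h b)))"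

definition rnb :: "('a \<Rightarrow> 'a \<Rightarrow> 'a) \<Rightarrow> bool" where
  "rnb c \<longleftrightarrow> (\<forall>x y z. c (c x y) z = c x (c y z)) \<and> (\<forall>x. c x x = x) \<and>
             (\<forall>x y z. c (c x y) z = c (c y x) z)"

definition semilattice_op :: "('a \<Rightarrow> 'a \<Rightarrow> 'a) \<Rightarrow> bool" where
  "semilattice_op i \<longleftrightarrow> (\<forall>x y z. i (i x y) z = i x (i y z)) \<and>
      (\<forall>x y. i x y = i y x) \<and> (\<forall>x. i x x = x)"

definition rnb_int :: "('a \<Rightarrow> 'a \<Rightarrow> 'a) \<Rightarrow> ('a \<Rightarrow> 'a \<Rightarrow> 'a) \<Rightarrow> bool" where
  "rnb_int c i \<longleftrightarrow> rnb c \<and> semilattice_op i \<and>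
      (\<forall>x y. c (i x y) x = i x y) \<and>
      (\<forall>x y z. c x (i y z) = i (c x y) z)"

definition minus_alg :: "('a \<Rightarrow> 'a \<Rightarrow> 'a) \<Rightarrow> ('a \<Rightarrow> 'a \<Rightarrow> 'a) \<Rightarrow> bool" where
  "minus_alg c m \<longleftrightarrow>
     (\<forall>x y. c x y = m y (m y x)) \<and> rnb c \<and>
     (\<exists>z. (\<forall>x. m x x = z) \<and> (\<forall>x. c x z = z \<and> c z x = z) \<and>
          (\<forall>x y. c (m x y) y = z)) \<and>
     (\<forall>x y. c (m x y) x = m x y) \<and>
     (\<forall>x y z. c (m x y) z = m (c x z) y) \<and>
     (\<forall>s t x. m s x = m t x \<and> c x s = c x t \<longrightarrow> s = t)"

text \<open>In the extensions, the constant 0 of a minus-algebra is written as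
m x x (which equals 0 for every x).\<close>

definition minus_alg_ovr ::
  "('a \<Rightarrow> 'a \<Rightarrow> 'a) \<Rightarrow> ('a \<Rightarrow> 'a \<Rightarrow> 'a) \<Rightarrow> ('a \<Rightarrow> 'a \<Rightarrow> 'a) \<Rightarrow> bool" where
  "minus_alg_ovr c m ov \<longleftrightarrow> minus_alg c m \<and>
     (\<forall>x y. m (ov x y) x = m y x) \<and> (\<forall>x y. c x (ov x y) = x)"

definition minus_alg_upd ::
  "('a \<Rightarrow> 'a \<Rightarrow> 'a) \<Rightarrow> ('a \<Rightarrow> 'a \<Rightarrow> 'a) \<Rightarrow> ('a \<Rightarrow> 'a \<Rightarrow> 'a) \<Rightarrow> bool" where
  "minus_alg_upd c m up \<longleftrightarrow> minus_alg c m \<and>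
     (\<forall>x y. m (up x y) x = m x x \<and> m x (up x y) = m x x) \<and>
     (\<forall>x y. c (m (up x y) y) x = m (up x y) y) \<and>
     (\<forall>x y. c x y = c y (up x y))"

definition rnb_int_ovr ::
  "('a \<Rightarrow> 'a \<Rightarrow> 'a) \<Rightarrow> ('a \<Rightarrow> 'a \<Rightarrow> 'a) \<Rightarrow> ('a \<Rightarrow> 'a \<Rightarrow> 'a) \<Rightarrow> bool" where
  "rnb_int_ovr c i ov \<longleftrightarrow> rnb_int c i \<and>
     (\<forall>s t. c s (ov s t) = s) \<and>
     (\<forall>s t. ov (i (ov s t) t) s = ov s t) \<and>
     (\<forall>s t u. c (ov s t) u = ov (c s u) (c t u))"

definition rnb_int_upd ::
  "('a \<Rightarrow> 'a \<Rightarrow> 'a) \<Rightarrow> ('a \<Rightarrow> 'a \<Rightarrow> 'a) \<Rightarrow> ('a \<Rightarrow> 'a \<Rightarrow> 'a) \<Rightarrow> bool" where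
  "rnb_int_upd c i up \<longleftrightarrow> rnb_int c i \<and>
     (\<forall>s t. s = c (up s t) s) \<and>
     (\<forall>s t. up s t = up s (up s t)) \<and>
     (\<forall>s t. c s t = c t (up s t)) \<and>
     (\<forall>x y a b. c (i x (up x y)) a = c (i x (up x y)) b \<and> c y a = c y b
                 \<longrightarrow> c x a = c x b)"

definition comp_of_minus :: "('a \<Rightarrow> 'a \<Rightarrow> 'a) \<Rightarrow> 'a \<Rightarrow> 'a \<Rightarrow> 'a" where
  "comp_of_minus m x y = m y (m y x)"

end

theory Submission
  imports Defs
begin

text \<open>Soundness: every axiom holds pointwise in the partial values \<open>'y option\<close>, and an
  injective homomorphism into P(X,Y) reflects equations and quasi-equations.
  Completeness: the points of the representation are the prime filters F, i.e.\ the
  filters that meet one of p, q whenever they contain an element whose domain is covered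
  by those of p and q; the value of a at F is its germ, the class of the elements that
  agree with a on some member of F.  By Zorn's lemma every ideal is avoided by a prime
  filter, which yields enough points to separate any two elements, and the axioms of
  each signature are exactly what makes the germ map at a prime filter a homomorphism.\<close>

fun opt_op :: "pfop \<Rightarrow> 'y option \<Rightarrow> 'y option \<Rightarrow> 'y option" where
  "opt_op PRes u v = (if u = None then None else v)"
| "opt_op PMinus u v = (if v = None then u else None)"
| "opt_op PInter u v = (if u = v then u else None)"
| "opt_op POvr u v = (if u = None then v else u)"
| "opt_op PUpd u v = (if u = None \<or> v = None then u else v)"

lemma pf_op_apply: "pf_op s f g x = opt_op s (f x) (g x)"
  by (cases s) (auto simp: restrict_map_def map_add_def dom_def split: option.split)

lemma opt_op_None_None [simp]: "opt_op s None None = None"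
  by (cases s) auto

definition option_hom :: "pfop \<Rightarrow> ('a \<Rightarrow> 'a \<Rightarrow> 'a) \<Rightarrow> ('a \<Rightarrow> 'y option) \<Rightarrow> bool" where
  "option_hom s f \<phi> \<longleftrightarrow> (\<forall>a b. \<phi> (f a b) = opt_op s (\<phi> a) (\<phi> b))"

lemma option_homD: "option_hom s f \<phi> \<Longrightarrow> \<phi> (f a b) = opt_op s (\<phi> a) (\<phi> b)"
  by (simp add: option_hom_def)

lemma representable_inE:
  assumes "representable_in (TX :: 'x itself) (TY :: 'y itself) ops"
  obtains h :: "'a \<Rightarrow> 'x \<Rightarrow> 'y option"
  where "inj h" and "\<And>s f x. (s, f) \<in> set ops \<Longrightarrow> option_hom s f (\<lambda>a. h a x)"
proof -
  from assms obtain h :: "'a \<Rightarrow> 'x \<Rightarrow> 'y option" where "inj h"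
    and "\<forall>(s, f) \<in> set ops. \<forall>a b. h (f a b) = pf_op s (h a) (h b)"
    unfolding representable_in_def by blast
  then show thesis
    by (intro that) (auto simp: option_hom_def pf_op_apply)
qed

lemma representable_in_if_separating:
  assumes "\<And>s t :: 'a. s \<noteq> t \<Longrightarrow>
    \<exists>\<phi> :: 'a \<Rightarrow> 'a option. (\<forall>(p, f) \<in> set ops. option_hom p f \<phi>) \<and> \<phi> s \<noteq> \<phi> t"
  shows "representable_in TYPE('a \<times> 'a) TYPE('a) ops"
proof -
  \<comment> \<open>one point per pair (s, t), at which a map separating s from t is used\<close>
  define sep where "sep s t \<phi> \<longleftrightarrow> (\<forall>(p, f) \<in> set ops. option_hom p f \<phi>) \<and> \<phi> s \<noteq> \<phi> t"
    for s t and \<phi> :: "'a \<Rightarrow> 'a option"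
  define \<Phi> where "\<Phi> s t = (SOME \<phi>. sep s t \<phi>)" for s t
  have \<Phi>: "sep s t (\<Phi> s t)" if "s \<noteq> t" for s t
  proof -
    have "\<exists>\<phi>. sep s t \<phi>" using assms[OF that] unfolding sep_def .
    then show ?thesis unfolding \<Phi>_def by (rule someI_ex)
  qed
  define h where "h a = (\<lambda>(s, t). if s = t then None else \<Phi> s t a)" for a
  have "inj h"
  proof (rule injI)
    fix a b
    assume "h a = h b"
    then have "h a (a, b) = h b (a, b)" by simp
    then show "a = b" using \<Phi>[of a b] by (auto simp: h_def sep_def split: if_splits)
  qed
  moreover have "h (f a b) = pf_op p (h a) (h b)" if op: "(p, f) \<in> set ops" for p f a b
  proof (rule ext, clarify)
    fix s t
    show "h (f a b) (s, t) = pf_op p (h a) (h b) (s, t)"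
    proof (cases "s = t")
      case False
      then have "option_hom p f (\<Phi> s t)" using \<Phi> op unfolding sep_def by blast
      then show ?thesis using False by (simp add: h_def pf_op_apply option_hom_def)
    qed (simp add: h_def pf_op_apply)
  qed
  ultimately show ?thesis
    unfolding representable_in_def by (intro exI[of _ UNIV] exI[of _ h]) blast
qed

section \<open>Soundness\<close>

lemma option_hom_comp_of_minus:
  "option_hom PMinus m \<phi> \<Longrightarrow> option_hom PRes (comp_of_minus m) \<phi>"
  by (simp add: option_hom_def comp_of_minus_def)

lemma inj_fun_eqI: "inj h \<Longrightarrow> (\<And>x. h a x = h b x) \<Longrightarrow> a = b"
  by (metis ext injD)

lemma rnb_if_embedded:
  assumes "inj h" and "\<And>x. option_hom PRes c (\<lambda>a. h a x)"
  shows "rnb c"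
  unfolding rnb_def
  by (intro conjI allI; rule inj_fun_eqI[OF assms(1)]) (auto simp: option_homD[OF assms(2)])

lemma rnb_int_if_embedded:
  assumes "inj h" and "\<And>x. option_hom PRes c (\<lambda>a. h a x)"
    and "\<And>x. option_hom PInter i (\<lambda>a. h a x)"
  shows "rnb_int c i"
  unfolding rnb_int_def semilattice_op_def
  by (intro conjI allI rnb_if_embedded[OF assms(1,2)]; rule inj_fun_eqI[OF assms(1)])
    (auto simp: option_homD[OF assms(2)] option_homD[OF assms(3)])

lemma rnb_int_ovr_if_embedded:
  assumes "inj h" and "\<And>x. option_hom PRes c (\<lambda>a. h a x)"
    and "\<And>x. option_hom PInter i (\<lambda>a. h a x)" and "\<And>x. option_hom POvr ov (\<lambda>a. h a x)"
  shows "rnb_int_ovr c i ov"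
  unfolding rnb_int_ovr_def
  by (intro conjI allI rnb_int_if_embedded[OF assms(1-3)]; rule inj_fun_eqI[OF assms(1)])
    (auto simp: option_homD[OF assms(2)] option_homD[OF assms(3)] option_homD[OF assms(4)])

lemma rnb_int_upd_if_embedded:
  assumes "inj h" and "\<And>x. option_hom PRes c (\<lambda>a. h a x)"
    and "\<And>x. option_hom PInter i (\<lambda>a. h a x)" and "\<And>x. option_hom PUpd up (\<lambda>a. h a x)"
  shows "rnb_int_upd c i up"
proof -
  note hom = option_homD[OF assms(2)] option_homD[OF assms(3)] option_homD[OF assms(4)]
  have cancel: "c x a = c x b"
    if "c (i x (up x y)) a = c (i x (up x y)) b" and "c y a = c y b" for x y a b
  proof (rule inj_fun_eqI[OF assms(1)])
    fix p
    have "h (c (i x (up x y)) a) p = h (c (i x (up x y)) b) p" and "h (c y a) p = h (c y b) p"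
      using that by simp_all
    then show "h (c x a) p = h (c x b) p" by (auto simp: hom split: if_splits)
  qed
  show ?thesis
    unfolding rnb_int_upd_def
  proof (intro conjI allI impI rnb_int_if_embedded[OF assms(1-3)])
    fix x y a b
    assume "c (i x (up x y)) a = c (i x (up x y)) b \<and> c y a = c y b"
    then show "c x a = c x b" using cancel by blast
  qed (rule inj_fun_eqI[OF assms(1)]; auto simp: hom)+
qed

lemma minus_alg_if_embedded:
  assumes "inj h" and "\<And>x. option_hom PMinus m (\<lambda>a. h a x)"
  shows "minus_alg (comp_of_minus m) m"
proof -
  note hom = option_homD[OF assms(2)]
  have cancel: "s = t"
    if "m s x = m t x" and "comp_of_minus m x s = comp_of_minus m x t" for s t x
  proof (rule inj_fun_eqI[OF assms(1)])
    fix p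
    have "h (m s x) p = h (m t x) p" and "h (comp_of_minus m x s) p = h (comp_of_minus m x t) p"
      using that by simp_all
    then show "h s p = h t p" by (auto simp: hom comp_of_minus_def split: if_splits)
  qed
  show ?thesis
    unfolding minus_alg_def
  proof (intro conjI allI impI exI[of _ "m undefined undefined"]
      rnb_if_embedded[OF assms(1) option_hom_comp_of_minus[OF assms(2)]])
    fix s t x
    assume "m s x = m t x \<and> comp_of_minus m x s = comp_of_minus m x t"
    then show "s = t" using cancel by blast
  qed (simp add: comp_of_minus_def |
      rule inj_fun_eqI[OF assms(1)]; auto simp: hom comp_of_minus_def)+
qed

lemma minus_alg_ovr_if_embedded:
  assumes "inj h" and "\<And>x. option_hom PMinus m (\<lambda>a. h a x)"
    and "\<And>x. option_hom POvr ov (\<lambda>a. h a x)"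
  shows "minus_alg_ovr (comp_of_minus m) m ov"
  unfolding minus_alg_ovr_def
  by (intro conjI allI minus_alg_if_embedded[OF assms(1,2)]; rule inj_fun_eqI[OF assms(1)])
    (auto simp: option_homD[OF assms(2)] option_homD[OF assms(3)] comp_of_minus_def)

lemma minus_alg_upd_if_embedded:
  assumes "inj h" and "\<And>x. option_hom PMinus m (\<lambda>a. h a x)"
    and "\<And>x. option_hom PUpd up (\<lambda>a. h a x)"
  shows "minus_alg_upd (comp_of_minus m) m up"
  unfolding minus_alg_upd_def
  by (intro conjI allI minus_alg_if_embedded[OF assms(1,2)]; rule inj_fun_eqI[OF assms(1)])
    (auto simp: option_homD[OF assms(2)] option_homD[OF assms(3)] comp_of_minus_def)

section \<open>Right normal bands\<close>

locale right_normal_band =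
  fixes comp :: "'a \<Rightarrow> 'a \<Rightarrow> 'a"  (infixl \<open>\<cdot>\<close> 70)
  assumes rnb: "rnb (\<cdot>)"
begin

lemma assoc: "x \<cdot> y \<cdot> z = x \<cdot> (y \<cdot> z)"
  using rnb unfolding rnb_def by blast

lemma idem [simp]: "x \<cdot> x = x"
  using rnb unfolding rnb_def by blast

lemma right_normal: "x \<cdot> y \<cdot> z = y \<cdot> x \<cdot> z"
  using rnb unfolding rnb_def by blast

lemma left_commute: "x \<cdot> (y \<cdot> z) = y \<cdot> (x \<cdot> z)"
  by (simp only: right_normal flip: assoc)

lemma right_normal_assoc: "x \<cdot> (y \<cdot> z) = y \<cdot> x \<cdot> z"
  by (simp only: right_normal flip: assoc)

lemma comp_right_idem [simp]: "x \<cdot> y \<cdot> y = x \<cdot> y"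
  by (simp add: assoc)

lemma comp_left_idem [simp]: "x \<cdot> (x \<cdot> y) = x \<cdot> y"
  by (simp flip: assoc)

lemma comp_absorb [simp]: "y \<cdot> (x \<cdot> y) = x \<cdot> y"
  by (simp only: left_commute[of y] idem)

text \<open>In P(X,Y), \<open>x \<preceq> y\<close> means dom x \<subseteq> dom y, and \<open>covered a p q\<close> means
  dom a \<subseteq> dom p \<union> dom q.\<close>

definition below :: "'a \<Rightarrow> 'a \<Rightarrow> bool"  (infix \<open>\<preceq>\<close> 50) where
  "x \<preceq> y \<longleftrightarrow> y \<cdot> x = x"

definition covered :: "'a \<Rightarrow> 'a \<Rightarrow> 'a \<Rightarrow> bool" where
  "covered a p q \<longleftrightarrow> (\<forall>z z'. p \<cdot> z = p \<cdot> z' \<and> q \<cdot> z = q \<cdot> z' \<longrightarrow> a \<cdot> z = a \<cdot> z')"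

lemma below_refl [simp]: "x \<preceq> x"
  by (simp add: below_def)

lemma below_trans: "x \<preceq> y \<Longrightarrow> y \<preceq> z \<Longrightarrow> x \<preceq> z"
  unfolding below_def by (metis assoc)

lemma below_if_comp_eq: "x \<cdot> y = x \<Longrightarrow> x \<preceq> y"
  unfolding below_def by (metis comp_absorb)

lemma comp_below_left [simp]: "x \<cdot> y \<preceq> x"
  by (simp add: below_def flip: assoc)

lemma comp_below_right [simp]: "x \<cdot> y \<preceq> y"
  by (simp add: below_def)

lemma below_comp_iff: "z \<preceq> x \<cdot> y \<longleftrightarrow> z \<preceq> x \<and> z \<preceq> y"
proof
  assume "z \<preceq> x \<cdot> y"
  then show "z \<preceq> x \<and> z \<preceq> y" using below_trans comp_below_left comp_below_right by blast
next
  assume "z \<preceq> x \<and> z \<preceq> y"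
  then show "z \<preceq> x \<cdot> y" by (simp add: below_def assoc)
qed

lemma below_comp_mono:
  assumes "x \<preceq> y"
  shows "x \<cdot> p \<preceq> y \<cdot> p"
proof -
  have "y \<cdot> p \<cdot> (x \<cdot> p) = y \<cdot> (x \<cdot> p)" by (simp add: assoc)
  also have "\<dots> = x \<cdot> p" using assms by (simp add: below_def flip: assoc)
  finally show ?thesis unfolding below_def .
qed

lemma covered_restrict:
  assumes "covered a p q" and "x \<preceq> a"
  shows "covered x (x \<cdot> p) (x \<cdot> q)"
  unfolding covered_def
proof (intro allI impI)
  fix z z'
  assume "x \<cdot> p \<cdot> z = x \<cdot> p \<cdot> z' \<and> x \<cdot> q \<cdot> z = x \<cdot> q \<cdot> z'"
  then have "p \<cdot> (x \<cdot> z) = p \<cdot> (x \<cdot> z') \<and> q \<cdot> (x \<cdot> z) = q \<cdot> (x \<cdot> z')"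
    by (simp only: right_normal_assoc)
  then have "a \<cdot> (x \<cdot> z) = a \<cdot> (x \<cdot> z')"
    using assms(1) unfolding covered_def by blast
  then show "x \<cdot> z = x \<cdot> z'"
    using assms(2) by (simp add: below_def flip: assoc)
qed

text \<open>Every point x of a representation yields the prime filter {a. x \<in> dom a}.\<close>

definition is_filter :: "'a set \<Rightarrow> bool" where
  "is_filter F \<longleftrightarrow> (\<forall>a b. a \<cdot> b \<in> F \<longleftrightarrow> a \<in> F \<and> b \<in> F)"

definition is_prime_filter :: "'a set \<Rightarrow> bool" where
  "is_prime_filter F \<longleftrightarrow> is_filter F \<and> (\<forall>a p q. a \<in> F \<longrightarrow> covered a p q \<longrightarrow> p \<in> F \<or> q \<in> F)"

definition is_ideal :: "'a set \<Rightarrow> bool" where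
  "is_ideal I \<longleftrightarrow> (\<forall>x y. x \<preceq> y \<longrightarrow> y \<in> I \<longrightarrow> x \<in> I) \<and>
     (\<forall>a p q. covered a p q \<longrightarrow> p \<in> I \<longrightarrow> q \<in> I \<longrightarrow> a \<in> I)"

lemma prime_filter_imp_filter: "is_prime_filter F \<Longrightarrow> is_filter F"
  by (simp add: is_prime_filter_def)

lemma filter_comp_iff: "is_filter F \<Longrightarrow> a \<cdot> b \<in> F \<longleftrightarrow> a \<in> F \<and> b \<in> F"
  by (simp add: is_filter_def)

lemma filter_up: "is_filter F \<Longrightarrow> x \<in> F \<Longrightarrow> x \<preceq> y \<Longrightarrow> y \<in> F"
  by (metis below_def filter_comp_iff)

lemma ideal_down: "is_ideal I \<Longrightarrow> y \<in> I \<Longrightarrow> x \<preceq> y \<Longrightarrow> x \<in> I"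
  by (simp add: is_ideal_def)

lemma ideal_covered: "is_ideal I \<Longrightarrow> covered a p q \<Longrightarrow> p \<in> I \<Longrightarrow> q \<in> I \<Longrightarrow> a \<in> I"
  by (simp add: is_ideal_def)

lemma filter_principal: "is_filter {y. w \<preceq> y}"
  by (simp add: is_filter_def below_comp_iff)

lemma filter_extend:
  assumes "is_filter F"
  shows "is_filter {y. \<exists>f\<in>F. f \<cdot> b \<preceq> y}"
  unfolding is_filter_def
proof (intro allI iffI)
  fix y z
  assume "y \<cdot> z \<in> {y. \<exists>f\<in>F. f \<cdot> b \<preceq> y}"
  then show "y \<in> {y. \<exists>f\<in>F. f \<cdot> b \<preceq> y} \<and> z \<in> {y. \<exists>f\<in>F. f \<cdot> b \<preceq> y}"
    by (auto simp: below_comp_iff)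
next
  fix y z
  assume "y \<in> {y. \<exists>f\<in>F. f \<cdot> b \<preceq> y} \<and> z \<in> {y. \<exists>f\<in>F. f \<cdot> b \<preceq> y}"
  then obtain f g where f: "f \<in> F" "f \<cdot> b \<preceq> y" and g: "g \<in> F" "g \<cdot> b \<preceq> z" by blast
  have "f \<cdot> g \<in> F" using assms f g by (simp add: filter_comp_iff)
  moreover have "f \<cdot> g \<cdot> b \<preceq> y \<cdot> z"
    unfolding below_comp_iff
    using below_trans below_comp_mono comp_below_left comp_below_right f(2) g(2) by blast
  ultimately show "y \<cdot> z \<in> {y. \<exists>f\<in>F. f \<cdot> b \<preceq> y}" by blast
qed

lemma filter_Union_chain:
  assumes "subset.chain {F. is_filter F} C"
  shows "is_filter (\<Union>C)"
  unfolding is_filter_def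
proof (intro allI iffI)
  fix a b
  assume "a \<cdot> b \<in> \<Union>C"
  then obtain F where "F \<in> C" "a \<cdot> b \<in> F" by blast
  moreover have "is_filter F" using assms \<open>F \<in> C\<close> by (auto simp: subset.chain_def)
  ultimately show "a \<in> \<Union>C \<and> b \<in> \<Union>C" by (auto simp: filter_comp_iff)
next
  fix a b
  assume "a \<in> \<Union>C \<and> b \<in> \<Union>C"
  then obtain F G where FG: "F \<in> C" "G \<in> C" and "a \<in> F" "b \<in> G" by blast
  moreover have "F \<subseteq> G \<or> G \<subseteq> F" "is_filter F" "is_filter G"
    using assms FG by (auto simp: subset.chain_def)
  ultimately have "a \<cdot> b \<in> F \<or> a \<cdot> b \<in> G" by (auto simp: filter_comp_iff)
  then show "a \<cdot> b \<in> \<Union>C" using FG by blast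
qed

lemma ideal_principal: "is_ideal {y. y \<preceq> t}"
proof -
  have "a \<preceq> t" if "covered a p q" "p \<preceq> t" "q \<preceq> t" for a p q
  proof -
    have "p \<cdot> a = p \<cdot> (t \<cdot> a)" "q \<cdot> a = q \<cdot> (t \<cdot> a)"
      using that(2,3) by (simp_all add: below_def right_normal_assoc)
    then have "a = a \<cdot> (t \<cdot> a)"
      using that(1) unfolding covered_def by (metis idem)
    also have "\<dots> = t \<cdot> a" by (simp add: right_normal_assoc)
    finally show ?thesis unfolding below_def by (rule sym)
  qed
  then show ?thesis unfolding is_ideal_def using below_trans by blast
qed

lemma ideal_equalizer: "is_ideal {u. u \<cdot> s = u \<cdot> t}"
proof -
  have "x \<cdot> s = x \<cdot> t" if "y \<cdot> x = x" "y \<cdot> s = y \<cdot> t" for x y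
  proof -
    have "x \<cdot> s = y \<cdot> x \<cdot> s" using that(1) by simp
    also have "\<dots> = x \<cdot> (y \<cdot> t)" using that(2) by (simp flip: right_normal_assoc)
    also have "\<dots> = x \<cdot> t" using that(1) by (simp add: right_normal_assoc)
    finally show ?thesis .
  qed
  then show ?thesis unfolding is_ideal_def covered_def below_def by blast
qed

lemma prime_if_maximal_filter:
  assumes I: "is_ideal I" and M: "is_filter M" "M \<inter> I = {}"
    and maximal: "\<And>G. is_filter G \<Longrightarrow> G \<inter> I = {} \<Longrightarrow> M \<subseteq> G \<Longrightarrow> G = M"
  shows "is_prime_filter M"
proof -
  have escape: "\<exists>f\<in>M. f \<cdot> b \<in> I" if "b \<notin> M" and "f\<^sub>0 \<in> M" for b f\<^sub>0
  proof (rule ccontr)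
    assume "\<not> (\<exists>f\<in>M. f \<cdot> b \<in> I)"
    then have "{y. \<exists>f\<in>M. f \<cdot> b \<preceq> y} \<inter> I = {}"
      using I ideal_down by blast
    moreover have "M \<subseteq> {y. \<exists>f\<in>M. f \<cdot> b \<preceq> y}"
      using comp_below_left by blast
    ultimately have "{y. \<exists>f\<in>M. f \<cdot> b \<preceq> y} = M"
      using maximal filter_extend[OF M(1)] by blast
    moreover have "b \<in> {y. \<exists>f\<in>M. f \<cdot> b \<preceq> y}"
      using that(2) comp_below_right by blast
    ultimately show False using that(1) by blast
  qed
  have "p \<in> M \<or> q \<in> M" if a: "a \<in> M" "covered a p q" for a p q
  proof (rule ccontr)
    assume "\<not> (p \<in> M \<or> q \<in> M)"
    then obtain f g where f: "f \<in> M" "f \<cdot> p \<in> I" and g: "g \<in> M" "g \<cdot> q \<in> I"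
      using escape a(1) by blast
    define x where "x = a \<cdot> (f \<cdot> g)"
    have "x \<in> M" using M(1) a(1) f(1) g(1) by (simp add: x_def filter_comp_iff)
    have "x \<preceq> a" "x \<preceq> f" "x \<preceq> g"
      using below_comp_iff[of x f g] by (simp_all add: x_def)
    then have "covered x (x \<cdot> p) (x \<cdot> q)" "x \<cdot> p \<in> I" "x \<cdot> q \<in> I"
      using covered_restrict[OF a(2)] ideal_down[OF I f(2) below_comp_mono]
        ideal_down[OF I g(2) below_comp_mono] by simp_all
    then have "x \<in> I" by (rule ideal_covered[OF I])
    then show False using \<open>x \<in> M\<close> M(2) by blast
  qed
  then show ?thesis using M(1) by (simp add: is_prime_filter_def)
qed

lemma prime_filter_exists:
  assumes "is_ideal I" and "w \<notin> I"
  obtains F where "is_prime_filter F" "w \<in> F" "F \<inter> I = {}"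
proof -
  let ?A = "{F. is_filter F \<and> w \<in> F \<and> F \<inter> I = {}}"
  have "{y. w \<preceq> y} \<inter> I = {}"
    using assms ideal_down by blast
  then have principal: "{y. w \<preceq> y} \<in> ?A"
    using filter_principal below_refl by blast
  have "\<exists>M\<in>?A. \<forall>G\<in>?A. M \<subseteq> G \<longrightarrow> G = M"
  proof (rule subset_Zorn_nonempty)
    fix C
    assume "C \<noteq> {}" and "subset.chain ?A C"
    then have chain: "subset.chain {F. is_filter F} C" and A: "C \<subseteq> ?A"
      unfolding subset.chain_def by blast+
    from chain have "is_filter (\<Union>C)" by (rule filter_Union_chain)
    moreover have "w \<in> \<Union>C" using \<open>C \<noteq> {}\<close> A by blast
    moreover have "\<Union>C \<inter> I = {}" using A by blast
    ultimately show "\<Union>C \<in> ?A" by blast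
  qed (metis empty_iff principal)
  then obtain M where "M \<in> ?A" and maximal: "\<forall>G\<in>?A. M \<subseteq> G \<longrightarrow> G = M" ..
  then have M: "is_filter M" "w \<in> M" "M \<inter> I = {}" by blast+
  have "is_prime_filter M"
  proof (rule prime_if_maximal_filter[OF assms(1) M(1,3)])
    fix G
    assume "is_filter G" "G \<inter> I = {}" "M \<subseteq> G"
    with M(2) have "G \<in> ?A" by blast
    with maximal \<open>M \<subseteq> G\<close> show "G = M" by blast
  qed
  with M(2,3) show thesis using that by blast
qed

text \<open>The values of the representation must lie in \<open>'a\<close>, so a germ is represented by a
  chosen member of its class.\<close>

definition germ_eq :: "'a set \<Rightarrow> 'a \<Rightarrow> 'a \<Rightarrow> bool" where
  "germ_eq F a b \<longleftrightarrow> a \<in> F \<and> b \<in> F \<and> (\<exists>u\<in>F. u \<cdot> a = u \<cdot> b)"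

definition germ :: "'a set \<Rightarrow> 'a \<Rightarrow> 'a option" where
  "germ F a = (if a \<in> F then Some (SOME b. germ_eq F a b) else None)"

lemma germ_eq_refl: "a \<in> F \<Longrightarrow> germ_eq F a a"
  by (auto simp: germ_eq_def)

lemma germ_eq_sym: "germ_eq F a b \<Longrightarrow> germ_eq F b a"
  unfolding germ_eq_def by (metis (no_types))

lemma germ_eq_trans:
  assumes F: "is_filter F" and "germ_eq F a b" and "germ_eq F b d"
  shows "germ_eq F a d"
proof -
  obtain u v where u: "u \<in> F" "u \<cdot> a = u \<cdot> b" and v: "v \<in> F" "v \<cdot> b = v \<cdot> d"
    using assms(2,3) by (auto simp: germ_eq_def)
  have "u \<cdot> v \<cdot> a = v \<cdot> (u \<cdot> a)" by (simp add: assoc left_commute[of u])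
  also have "\<dots> = u \<cdot> (v \<cdot> b)" using u(2) by (simp add: left_commute[of v])
  also have "\<dots> = u \<cdot> v \<cdot> d" using v(2) by (simp add: assoc)
  finally have "u \<cdot> v \<cdot> a = u \<cdot> v \<cdot> d" .
  moreover have "u \<cdot> v \<in> F" using F u(1) v(1) by (simp add: filter_comp_iff)
  ultimately show ?thesis using assms(2,3) unfolding germ_eq_def by blast
qed

lemma germ_eq_if_restriction:
  assumes "is_filter F" "u \<in> F" "u \<cdot> a = u" "u \<cdot> b = u"
  shows "germ_eq F a b"
  using assms by (metis germ_eq_def filter_comp_iff)

lemma germ_eq_if_comp_eq:
  assumes F: "is_filter F" and "a \<in> F" "b \<in> F" and "a \<cdot> f = f" "a \<cdot> b = b \<cdot> f"
  shows "germ_eq F f b"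
proof (rule germ_eq_if_restriction[OF F])
  show "a \<cdot> b \<in> F" using assms(1-3) by (simp add: filter_comp_iff)
  have "a \<cdot> b \<cdot> f = b \<cdot> (a \<cdot> f)" by (simp add: assoc left_commute[of a])
  then show "a \<cdot> b \<cdot> f = a \<cdot> b" using assms(4,5) by simp
qed simp

lemma germ_None_iff [simp]: "germ F a = None \<longleftrightarrow> a \<notin> F"
  by (simp add: germ_def)

lemma germ_outside [simp]: "a \<notin> F \<Longrightarrow> germ F a = None"
  by simp

lemma germ_eq_iff:
  assumes F: "is_filter F" and "a \<in> F"
  shows "germ F a = germ F b \<longleftrightarrow> germ_eq F a b"
proof
  have some: "germ_eq F x (SOME y. germ_eq F x y)" if "x \<in> F" for x
    using germ_eq_refl[OF that] by (rule someI)
  assume "germ F a = germ F b"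
  with \<open>a \<in> F\<close> have "b \<in> F" "(SOME y. germ_eq F a y) = (SOME y. germ_eq F b y)"
    by (auto simp: germ_def split: if_splits)
  with some[OF \<open>a \<in> F\<close>] some[OF \<open>b \<in> F\<close>] show "germ_eq F a b"
    by (metis F germ_eq_sym germ_eq_trans)
next
  assume ab: "germ_eq F a b"
  then have "germ_eq F a = germ_eq F b"
    using F germ_eq_sym germ_eq_trans by blast
  moreover have "b \<in> F" using ab by (simp add: germ_eq_def)
  ultimately show "germ F a = germ F b" using \<open>a \<in> F\<close> by (simp add: germ_def)
qed

lemma germ_cong: "is_filter F \<Longrightarrow> germ_eq F a b \<Longrightarrow> germ F a = germ F b"
  using germ_eq_iff germ_eq_def by blast

lemma germ_hom_comp:
  assumes F: "is_filter F"
  shows "option_hom PRes (\<cdot>) (germ F)"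
  unfolding option_hom_def
proof (intro allI)
  fix a b
  show "germ F (a \<cdot> b) = opt_op PRes (germ F a) (germ F b)"
  proof (cases "a \<cdot> b \<in> F")
    case True
    then have "germ F (a \<cdot> b) = germ F b"
      by (simp add: germ_cong[OF F] germ_eq_if_restriction[OF F])
    with True F show ?thesis by (simp add: filter_comp_iff)
  next
    case False
    with F show ?thesis by (auto simp: filter_comp_iff)
  qed
qed

lemma germ_hom_minusI:
  assumes F: "is_filter F"
    and mem: "\<And>a b. f a b \<in> F \<longleftrightarrow> a \<in> F \<and> b \<notin> F"
    and val: "\<And>a b. f a b \<in> F \<Longrightarrow> germ_eq F (f a b) a"
  shows "option_hom PMinus f (germ F)"
  unfolding option_hom_def
proof (intro allI)
  fix a b
  show "germ F (f a b) = opt_op PMinus (germ F a) (germ F b)"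
    using mem[of a b] germ_cong[OF F val[of a b]] by (cases "f a b \<in> F") auto
qed

lemma germ_hom_interI:
  assumes F: "is_filter F"
    and mem: "\<And>a b. f a b \<in> F \<longleftrightarrow> germ_eq F a b"
    and val: "\<And>a b. f a b \<in> F \<Longrightarrow> germ_eq F (f a b) a"
  shows "option_hom PInter f (germ F)"
  unfolding option_hom_def
proof (intro allI)
  fix a b
  show "germ F (f a b) = opt_op PInter (germ F a) (germ F b)"
    using mem[of a b] germ_cong[OF F val[of a b]] germ_eq_iff[OF F, of a b]
    by (cases "f a b \<in> F"; cases "a \<in> F") auto
qed

lemma germ_hom_ovrI:
  assumes F: "is_filter F"
    and mem: "\<And>a b. f a b \<in> F \<Longrightarrow> a \<in> F \<or> b \<in> F"
    and left: "\<And>a b. a \<in> F \<Longrightarrow> germ_eq F (f a b) a"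
    and right: "\<And>a b. a \<notin> F \<Longrightarrow> b \<in> F \<Longrightarrow> germ_eq F (f a b) b"
  shows "option_hom POvr f (germ F)"
  unfolding option_hom_def
proof (intro allI)
  fix a b
  show "germ F (f a b) = opt_op POvr (germ F a) (germ F b)"
    using mem[of a b] germ_cong[OF F left[of a b]] germ_cong[OF F right[of a b]]
    by (cases "a \<in> F"; cases "b \<in> F") auto
qed

lemma germ_hom_updI:
  assumes F: "is_filter F"
    and mem: "\<And>a b. f a b \<in> F \<Longrightarrow> a \<in> F"
    and both: "\<And>a b. a \<in> F \<Longrightarrow> b \<in> F \<Longrightarrow> germ_eq F (f a b) b"
    and left: "\<And>a b. a \<in> F \<Longrightarrow> b \<notin> F \<Longrightarrow> germ_eq F (f a b) a"
  shows "option_hom PUpd f (germ F)"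
  unfolding option_hom_def
proof (intro allI)
  fix a b
  show "germ F (f a b) = opt_op PUpd (germ F a) (germ F b)"
    using mem[of a b] germ_cong[OF F both[of a b]] germ_cong[OF F left[of a b]]
    by (cases "a \<in> F"; cases "b \<in> F") auto
qed

text \<open>The empty function lies in no filter {a. x \<in> dom a}; the minus signatures need this.\<close>

definition zero_free :: "'a set \<Rightarrow> bool" where
  "zero_free F \<longleftrightarrow> (\<forall>z. (\<forall>y. z \<cdot> y = z \<and> y \<cdot> z = z) \<longrightarrow> z \<notin> F)"

lemma separation_below:
  assumes "\<not> s \<preceq> t"
  obtains F where "is_prime_filter F" "zero_free F" "s \<in> F" "t \<notin> F"
proof -
  from assms have "s \<notin> {y. y \<preceq> t}" by simp
  then obtain F where F: "is_prime_filter F" "s \<in> F" and disjoint: "F \<inter> {y. y \<preceq> t} = {}"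
    by (rule prime_filter_exists[OF ideal_principal])
  then have "t \<notin> F" using below_refl by blast
  moreover have "zero_free F"
    using disjoint unfolding zero_free_def below_def by blast
  ultimately show thesis using that F by blast
qed

lemma separation:
  assumes "s \<noteq> t"
  obtains F where "is_prime_filter F" "zero_free F" "germ F s \<noteq> germ F t"
proof (cases "s \<preceq> t \<and> t \<preceq> s")
  case False
  then consider "\<not> s \<preceq> t" | "\<not> t \<preceq> s" by blast
  then show thesis
  proof cases
    case 1
    then obtain F where "is_prime_filter F" "zero_free F" "s \<in> F" "t \<notin> F"
      by (rule separation_below)
    then show thesis using that[of F] by (metis germ_None_iff)
  next
    case 2
    then obtain F where "is_prime_filter F" "zero_free F" "t \<in> F" "s \<notin> F"
      by (rule separation_below)
    then show thesis using that[of F] by (metis germ_None_iff)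
  qed
next
  case True
  with assms have "s \<notin> {u. u \<cdot> s = u \<cdot> t}" by (simp add: below_def)
  then obtain F where F: "is_prime_filter F" "s \<in> F"
    and disjoint: "F \<inter> {u. u \<cdot> s = u \<cdot> t} = {}"
    by (rule prime_filter_exists[OF ideal_equalizer])
  from disjoint have "\<not> germ_eq F s t" by (auto simp: germ_eq_def)
  then have "germ F s \<noteq> germ F t"
    using germ_eq_iff[OF prime_filter_imp_filter[OF F(1)] F(2)] by simp
  moreover have "zero_free F"
    unfolding zero_free_def
  proof (intro allI impI)
    fix z
    assume "\<forall>y. z \<cdot> y = z \<and> y \<cdot> z = z"
    then have "z \<cdot> s = z \<cdot> t" by simp
    with disjoint show "z \<notin> F" by blast
  qed
  ultimately show thesis using that F(1) by blast
qed

theorem representable_if_germ_homs: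
  assumes "\<And>F. is_prime_filter F \<Longrightarrow> zero_free F \<Longrightarrow> \<forall>(s, f) \<in> set ops. option_hom s f (germ F)"
  shows "representable_in TYPE('a \<times> 'a) TYPE('a) ops"
proof (rule representable_in_if_separating)
  fix s t :: 'a
  assume "s \<noteq> t"
  then obtain F where F: "is_prime_filter F" "zero_free F" "germ F s \<noteq> germ F t"
    by (rule separation)
  show "\<exists>\<phi> :: 'a \<Rightarrow> 'a option. (\<forall>(p, f) \<in> set ops. option_hom p f \<phi>) \<and> \<phi> s \<noteq> \<phi> t"
    using assms[OF F(1,2)] F(3) by blast
qed

end

section \<open>Intersection, override and update over a right normal band\<close>

locale rnb_isect =
  fixes comp :: "'a \<Rightarrow> 'a \<Rightarrow> 'a"  (infixl \<open>\<cdot>\<close> 70)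
    and isect :: "'a \<Rightarrow> 'a \<Rightarrow> 'a"
  assumes rnb_int: "rnb_int (\<cdot>) isect"
begin

sublocale right_normal_band
  using rnb_int by unfold_locales (simp add: rnb_int_def)

lemma isect_comm: "isect x y = isect y x"
  using rnb_int by (simp add: rnb_int_def semilattice_op_def)

lemma isect_idem: "isect x x = x"
  using rnb_int by (simp add: rnb_int_def semilattice_op_def)

lemma isect_comp: "isect x y \<cdot> x = isect x y"
  using rnb_int by (simp add: rnb_int_def)

lemma comp_isect: "x \<cdot> isect y z = isect (x \<cdot> y) z"
  using rnb_int by (simp add: rnb_int_def)

lemma isect_mem_iff:
  assumes F: "is_filter F"
  shows "isect a b \<in> F \<longleftrightarrow> germ_eq F a b"
proof
  assume "isect a b \<in> F"
  moreover have "isect a b \<cdot> a = isect a b" "isect a b \<cdot> b = isect a b"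
    using isect_comp[of a b] isect_comp[of b a] by (simp_all add: isect_comm)
  ultimately show "germ_eq F a b"
    using F by (metis germ_eq_if_restriction idem)
next
  assume "germ_eq F a b"
  then obtain u where "u \<in> F" "b \<in> F" "u \<cdot> a = u \<cdot> b" by (auto simp: germ_eq_def)
  have "u \<cdot> isect a b = isect (u \<cdot> b) b" using \<open>u \<cdot> a = u \<cdot> b\<close> by (simp add: comp_isect)
  also have "\<dots> = u \<cdot> b" by (simp only: comp_isect[symmetric] isect_idem)
  finally have "u \<cdot> isect a b \<in> F" using F \<open>u \<in> F\<close> \<open>b \<in> F\<close> by (simp add: filter_comp_iff)
  with F show "isect a b \<in> F" by (simp add: filter_comp_iff)
qed

lemma germ_hom_isect:
  assumes F: "is_filter F"
  shows "option_hom PInter isect (germ F)"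
proof (rule germ_hom_interI[OF F])
  show "isect a b \<in> F \<longleftrightarrow> germ_eq F a b" for a b
    by (rule isect_mem_iff[OF F])
  show "germ_eq F (isect a b) a" if "isect a b \<in> F" for a b
    using germ_eq_if_restriction[OF F that] isect_comp by simp
qed

lemma representable:
  "representable_in TYPE('a \<times> 'a) TYPE('a) [(PRes, (\<cdot>)), (PInter, isect)]"
  by (rule representable_if_germ_homs)
    (simp add: germ_hom_comp germ_hom_isect prime_filter_imp_filter)

end

locale rnb_isect_ovr =
  fixes comp :: "'a \<Rightarrow> 'a \<Rightarrow> 'a"  (infixl \<open>\<cdot>\<close> 70)
    and isect ovr :: "'a \<Rightarrow> 'a \<Rightarrow> 'a"
  assumes rnb_int_ovr: "rnb_int_ovr (\<cdot>) isect ovr"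
begin

sublocale rnb_isect
  using rnb_int_ovr by unfold_locales (simp add: rnb_int_ovr_def)

lemma comp_ovr: "s \<cdot> ovr s t = s"
  using rnb_int_ovr by (simp add: rnb_int_ovr_def)

lemma ovr_isect: "ovr (isect (ovr s t) t) s = ovr s t"
  using rnb_int_ovr by (simp add: rnb_int_ovr_def)

lemma ovr_comp: "ovr s t \<cdot> u = ovr (s \<cdot> u) (t \<cdot> u)"
  using rnb_int_ovr by (simp add: rnb_int_ovr_def)

lemma below_ovr_right: "b \<preceq> ovr a b"
  unfolding below_def by (metis comp_isect isect_comm isect_idem comp_ovr ovr_isect ovr_comp)

lemma germ_hom_ovr:
  assumes F: "is_prime_filter F"
  shows "option_hom POvr ovr (germ F)"
proof (rule germ_hom_ovrI)
  show "is_filter F" using F by (rule prime_filter_imp_filter)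
  have covered: "covered (ovr a b) a b" for a b
    by (simp add: covered_def ovr_comp)
  show "a \<in> F \<or> b \<in> F" if "ovr a b \<in> F" for a b
    using F that covered by (auto simp: is_prime_filter_def)
  show "germ_eq F (ovr a b) a" if "a \<in> F" for a b
    using germ_eq_if_restriction[OF \<open>is_filter F\<close> that] comp_ovr by simp
  show "germ_eq F (ovr a b) b" if "a \<notin> F" "b \<in> F" for a b
  proof -
    have "covered (ovr a b) (isect (ovr a b) b) a"
      using covered[of "isect (ovr a b) b" a] by (simp add: ovr_isect)
    moreover have "ovr a b \<in> F"
      using filter_up[OF \<open>is_filter F\<close> that(2) below_ovr_right] .
    ultimately have "isect (ovr a b) b \<in> F"
      using F that(1) by (auto simp: is_prime_filter_def)
    then show ?thesis using isect_mem_iff[OF \<open>is_filter F\<close>] by blast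
  qed
qed

lemma representable:
  "representable_in TYPE('a \<times> 'a) TYPE('a) [(PRes, (\<cdot>)), (PInter, isect), (POvr, ovr)]"
  by (rule representable_if_germ_homs)
    (simp add: germ_hom_comp germ_hom_isect germ_hom_ovr prime_filter_imp_filter)

end

locale rnb_isect_upd =
  fixes comp :: "'a \<Rightarrow> 'a \<Rightarrow> 'a"  (infixl \<open>\<cdot>\<close> 70)
    and isect upd :: "'a \<Rightarrow> 'a \<Rightarrow> 'a"
  assumes rnb_int_upd: "rnb_int_upd (\<cdot>) isect upd"
begin

sublocale rnb_isect
  using rnb_int_upd unfolding rnb_int_upd_def by unfold_locales blast

lemma upd_upd: "upd s (upd s t) = upd s t"
  using rnb_int_upd unfolding rnb_int_upd_def by metis

lemma comp_eq_comp_upd: "s \<cdot> t = t \<cdot> upd s t"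
  using rnb_int_upd unfolding rnb_int_upd_def by metis

lemma upd_cancel:
  "isect x (upd x y) \<cdot> a = isect x (upd x y) \<cdot> b \<Longrightarrow> y \<cdot> a = y \<cdot> b \<Longrightarrow> x \<cdot> a = x \<cdot> b"
  using rnb_int_upd unfolding rnb_int_upd_def by blast

lemma comp_upd: "s \<cdot> upd s t = upd s t"
  using comp_eq_comp_upd[of s "upd s t"] by (simp add: upd_upd)

lemma germ_hom_upd:
  assumes F: "is_prime_filter F"
  shows "option_hom PUpd upd (germ F)"
proof (rule germ_hom_updI)
  show filter: "is_filter F" using F by (rule prime_filter_imp_filter)
  show "a \<in> F" if "upd a b \<in> F" for a b
    using filter_up[OF filter that, of a] comp_upd by (simp add: below_def)
  show "germ_eq F (upd a b) b" if "a \<in> F" "b \<in> F" for a b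
    using germ_eq_if_comp_eq[OF filter that comp_upd comp_eq_comp_upd] .
  show "germ_eq F (upd a b) a" if "a \<in> F" "b \<notin> F" for a b
  proof -
    have "covered a (isect a (upd a b)) b"
      unfolding covered_def using upd_cancel by blast
    with F that have "isect a (upd a b) \<in> F" by (auto simp: is_prime_filter_def)
    then show ?thesis using isect_mem_iff[OF filter] germ_eq_sym by blast
  qed
qed

lemma representable:
  "representable_in TYPE('a \<times> 'a) TYPE('a) [(PRes, (\<cdot>)), (PInter, isect), (PUpd, upd)]"
  by (rule representable_if_germ_homs)
    (simp add: germ_hom_comp germ_hom_isect germ_hom_upd prime_filter_imp_filter)

end

section \<open>Minus-algebras\<close>

locale minus_algebra =
  fixes comp :: "'a \<Rightarrow> 'a \<Rightarrow> 'a"  (infixl \<open>\<cdot>\<close> 70)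
    and diff :: "'a \<Rightarrow> 'a \<Rightarrow> 'a"  (infixl \<open>\<ominus>\<close> 65)
  assumes minus_alg: "minus_alg (\<cdot>) (\<ominus>)"
begin

sublocale right_normal_band
  using minus_alg unfolding minus_alg_def by unfold_locales blast

lemma minus_zero:
  obtains z where "\<And>x. x \<ominus> x = z" "\<And>x. x \<cdot> z = z" "\<And>x. z \<cdot> x = z" "\<And>x y. (x \<ominus> y) \<cdot> y = z"
proof -
  from minus_alg obtain z
    where "\<forall>x. x \<ominus> x = z" "\<forall>x. x \<cdot> z = z \<and> z \<cdot> x = z" "\<forall>x y. (x \<ominus> y) \<cdot> y = z"
    unfolding minus_alg_def by blast
  then show thesis using that by blast
qed

lemma diff_self: "x \<ominus> x = y \<ominus> y"
  by (rule minus_zero) simp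

lemma zero_comp [simp]: "(x \<ominus> x) \<cdot> y = x \<ominus> x"
  by (rule minus_zero) simp

lemma comp_zero [simp]: "y \<cdot> (x \<ominus> x) = x \<ominus> x"
  by (rule minus_zero) simp

lemma diff_comp_right: "(x \<ominus> y) \<cdot> y = y \<ominus> y"
  by (rule minus_zero) simp

lemma diff_comp_left: "(x \<ominus> y) \<cdot> x = x \<ominus> y"
  using minus_alg unfolding minus_alg_def by blast

lemma diff_comp: "(x \<ominus> y) \<cdot> z = x \<cdot> z \<ominus> y"
  using minus_alg unfolding minus_alg_def by blast

lemma diff_cancel: "s \<ominus> x = t \<ominus> x \<Longrightarrow> x \<cdot> s = x \<cdot> t \<Longrightarrow> s = t"
  using minus_alg unfolding minus_alg_def by blast

lemma covered_diff: "covered a b (a \<ominus> b)"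
  unfolding covered_def
proof (intro allI impI)
  fix z z'
  assume agree: "b \<cdot> z = b \<cdot> z' \<and> (a \<ominus> b) \<cdot> z = (a \<ominus> b) \<cdot> z'"
  show "a \<cdot> z = a \<cdot> z'"
  proof (rule diff_cancel)
    show "a \<cdot> z \<ominus> b = a \<cdot> z' \<ominus> b" using agree by (simp add: diff_comp)
    show "b \<cdot> (a \<cdot> z) = b \<cdot> (a \<cdot> z')" using agree by (simp add: left_commute[of b])
  qed
qed

lemma diff_mem_iff:
  assumes F: "is_prime_filter F" "zero_free F"
  shows "a \<ominus> b \<in> F \<longleftrightarrow> a \<in> F \<and> b \<notin> F"
proof -
  have filter: "is_filter F" using F(1) by (rule prime_filter_imp_filter)
  have "b \<ominus> b \<notin> F"
    using F(2) unfolding zero_free_def by simp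
  then have "\<not> (a \<ominus> b \<in> F \<and> b \<in> F)"
    using filter diff_comp_right[of a b] by (metis filter_comp_iff)
  moreover have "a \<ominus> b \<in> F \<Longrightarrow> a \<in> F"
    using filter_up[OF filter] below_if_comp_eq[OF diff_comp_left] by blast
  moreover have "a \<in> F \<Longrightarrow> b \<notin> F \<Longrightarrow> a \<ominus> b \<in> F"
    using F(1) covered_diff[of a b] unfolding is_prime_filter_def by blast
  ultimately show ?thesis by blast
qed

lemma germ_hom_diff:
  assumes F: "is_prime_filter F" "zero_free F"
  shows "option_hom PMinus (\<ominus>) (germ F)"
proof (rule germ_hom_minusI)
  show filter: "is_filter F" using F(1) by (rule prime_filter_imp_filter)
  show "a \<ominus> b \<in> F \<longleftrightarrow> a \<in> F \<and> b \<notin> F" for a b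
    by (rule diff_mem_iff[OF F])
  show "germ_eq F (a \<ominus> b) a" if "a \<ominus> b \<in> F" for a b
    using germ_eq_if_restriction[OF filter that] diff_comp_left by simp
qed

lemma representable:
  "representable_in TYPE('a \<times> 'a) TYPE('a) [(PMinus, (\<ominus>))]"
  by (rule representable_if_germ_homs) (simp add: germ_hom_diff)

end

locale minus_ovr_algebra =
  fixes comp :: "'a \<Rightarrow> 'a \<Rightarrow> 'a"  (infixl \<open>\<cdot>\<close> 70)
    and diff :: "'a \<Rightarrow> 'a \<Rightarrow> 'a"  (infixl \<open>\<ominus>\<close> 65)
    and ovr :: "'a \<Rightarrow> 'a \<Rightarrow> 'a"
  assumes minus_alg_ovr: "minus_alg_ovr (\<cdot>) (\<ominus>) ovr"
begin

sublocale minus_algebra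
  using minus_alg_ovr unfolding minus_alg_ovr_def by unfold_locales blast

lemma ovr_diff: "ovr x y \<ominus> x = y \<ominus> x"
  using minus_alg_ovr unfolding minus_alg_ovr_def by blast

lemma comp_ovr: "x \<cdot> ovr x y = x"
  using minus_alg_ovr unfolding minus_alg_ovr_def by blast

lemma ovr_comp_diff: "ovr a b \<cdot> z \<ominus> a = b \<cdot> z \<ominus> a"
  by (simp flip: diff_comp add: ovr_diff)

lemma covered_ovr: "covered (ovr a b) a b"
  unfolding covered_def
proof (intro allI impI)
  fix z z'
  assume agree: "a \<cdot> z = a \<cdot> z' \<and> b \<cdot> z = b \<cdot> z'"
  show "ovr a b \<cdot> z = ovr a b \<cdot> z'"
  proof (rule diff_cancel)
    show "ovr a b \<cdot> z \<ominus> a = ovr a b \<cdot> z' \<ominus> a" using agree by (simp add: ovr_comp_diff)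
    show "a \<cdot> (ovr a b \<cdot> z) = a \<cdot> (ovr a b \<cdot> z')" using agree by (simp add: comp_ovr flip: assoc)
  qed
qed

lemma below_ovr_right: "b \<preceq> ovr a b"
  unfolding below_def
proof (rule diff_cancel)
  show "ovr a b \<cdot> b \<ominus> a = b \<ominus> a" by (simp add: ovr_comp_diff)
  show "a \<cdot> (ovr a b \<cdot> b) = a \<cdot> b" by (simp add: comp_ovr flip: assoc)
qed

lemma germ_hom_ovr:
  assumes F: "is_prime_filter F" "zero_free F"
  shows "option_hom POvr ovr (germ F)"
proof (rule germ_hom_ovrI)
  show filter: "is_filter F" using F(1) by (rule prime_filter_imp_filter)
  show "a \<in> F \<or> b \<in> F" if "ovr a b \<in> F" for a b
    using F(1) that covered_ovr by (auto simp: is_prime_filter_def)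
  show "germ_eq F (ovr a b) a" if "a \<in> F" for a b
    using germ_eq_if_restriction[OF filter that] comp_ovr by simp
  show "germ_eq F (ovr a b) b" if "a \<notin> F" "b \<in> F" for a b
  proof (rule germ_eq_if_restriction[OF filter])
    show "b \<ominus> a \<in> F" using diff_mem_iff[OF F] that by simp
    show "(b \<ominus> a) \<cdot> ovr a b = b \<ominus> a" using diff_comp_left[of "ovr a b" a] by (simp add: ovr_diff)
    show "(b \<ominus> a) \<cdot> b = b \<ominus> a" by (rule diff_comp_left)
  qed
qed

lemma representable:
  "representable_in TYPE('a \<times> 'a) TYPE('a) [(PMinus, (\<ominus>)), (POvr, ovr)]"
  by (rule representable_if_germ_homs) (simp add: germ_hom_diff germ_hom_ovr)

end

locale minus_upd_algebra =
  fixes comp :: "'a \<Rightarrow> 'a \<Rightarrow> 'a"  (infixl \<open>\<cdot>\<close> 70)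
    and diff :: "'a \<Rightarrow> 'a \<Rightarrow> 'a"  (infixl \<open>\<ominus>\<close> 65)
    and upd :: "'a \<Rightarrow> 'a \<Rightarrow> 'a"
  assumes minus_alg_upd: "minus_alg_upd (\<cdot>) (\<ominus>) upd"
begin

sublocale minus_algebra
  using minus_alg_upd unfolding minus_alg_upd_def by unfold_locales blast

lemma upd_diff: "upd x y \<ominus> x = x \<ominus> x"
  using minus_alg_upd unfolding minus_alg_upd_def by blast

lemma diff_upd: "x \<ominus> upd x y = x \<ominus> x"
  using minus_alg_upd unfolding minus_alg_upd_def by blast

lemma upd_diff_comp: "(upd x y \<ominus> y) \<cdot> x = upd x y \<ominus> y"
  using minus_alg_upd unfolding minus_alg_upd_def by blast

lemma comp_eq_comp_upd: "x \<cdot> y = y \<cdot> upd x y"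
  using minus_alg_upd unfolding minus_alg_upd_def by blast

lemma upd_comp: "upd a b \<cdot> a = a"
proof (rule diff_cancel)
  show "upd a b \<cdot> a \<ominus> upd a b = a \<ominus> upd a b"
    by (simp add: diff_upd diff_self[of "upd a b" a] flip: diff_comp)
  show "upd a b \<cdot> (upd a b \<cdot> a) = upd a b \<cdot> a" by simp
qed

lemma comp_upd: "a \<cdot> upd a b = upd a b"
proof (rule diff_cancel)
  show "a \<cdot> upd a b \<ominus> a = upd a b \<ominus> a"
    by (simp add: upd_diff flip: diff_comp)
  show "a \<cdot> (a \<cdot> upd a b) = a \<cdot> upd a b" by simp
qed

lemma germ_hom_upd:
  assumes F: "is_prime_filter F" "zero_free F"
  shows "option_hom PUpd upd (germ F)"
proof (rule germ_hom_updI)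
  show filter: "is_filter F" using F(1) by (rule prime_filter_imp_filter)
  show "a \<in> F" if "upd a b \<in> F" for a b
    using filter_up[OF filter that, of a] comp_upd by (simp add: below_def)
  show "germ_eq F (upd a b) b" if "a \<in> F" "b \<in> F" for a b
    using germ_eq_if_comp_eq[OF filter that comp_upd comp_eq_comp_upd] .
  show "germ_eq F (upd a b) a" if "a \<in> F" "b \<notin> F" for a b
  proof (rule germ_eq_if_restriction[OF filter])
    have "upd a b \<in> F"
      using filter_up[OF filter that(1), of "upd a b"] upd_comp by (simp add: below_def)
    then show "upd a b \<ominus> b \<in> F" using diff_mem_iff[OF F] that(2) by simp
  qed (simp_all add: diff_comp_left upd_diff_comp)
qed

lemma representable:
  "representable_in TYPE('a \<times> 'a) TYPE('a) [(PMinus, (\<ominus>)), (PUpd, upd)]"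
  by (rule representable_if_germ_homs) (simp add: germ_hom_diff germ_hom_upd)

end

locale minus_isect = minus_algebra comp diff + rnb_isect comp isect for comp diff isect
begin

lemma representable:
  "representable_in TYPE('a \<times> 'a) TYPE('a) [(PMinus, diff), (PInter, isect)]"
  by (rule representable_if_germ_homs)
    (simp add: germ_hom_diff germ_hom_isect prime_filter_imp_filter)

end

locale minus_ovr_isect = minus_ovr_algebra comp diff ovr + rnb_isect comp isect
  for comp diff ovr isect
begin

lemma representable:
  "representable_in TYPE('a \<times> 'a) TYPE('a) [(PMinus, diff), (POvr, ovr), (PInter, isect)]"
  by (rule representable_if_germ_homs)
    (simp add: germ_hom_diff germ_hom_ovr germ_hom_isect prime_filter_imp_filter)

end

locale minus_upd_isect = minus_upd_algebra comp diff upd + rnb_isect comp isect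
  for comp diff upd isect
begin

lemma representable:
  "representable_in TYPE('a \<times> 'a) TYPE('a) [(PMinus, diff), (PUpd, upd), (PInter, isect)]"
  by (rule representable_if_germ_homs)
    (simp add: germ_hom_diff germ_hom_upd germ_hom_isect prime_filter_imp_filter)

end

theorem corollary4p5:
  fixes TX :: "'x itself" and TY :: "'y itself"
  shows
  \<comment> \<open>(1) signature (\<circ>, \<inter>)\<close>
  "(\<forall>(c::'a \<Rightarrow> 'a \<Rightarrow> 'a) i.
      (representable_in TX TY [(PRes, c), (PInter, i)] \<longrightarrow> rnb_int c i) \<and>
      (rnb_int c i \<longrightarrow> representable_in TYPE('a \<times> 'a) TYPE('a) [(PRes, c), (PInter, i)]))
   \<and>
  \<comment> \<open>(2) signature (-)\<close>
   (\<forall>(m::'a \<Rightarrow> 'a \<Rightarrow> 'a).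
      (representable_in TX TY [(PMinus, m)] \<longrightarrow> minus_alg (comp_of_minus m) m) \<and>
      (minus_alg (comp_of_minus m) m \<longrightarrow> representable_in TYPE('a \<times> 'a) TYPE('a) [(PMinus, m)]))
   \<and>
  \<comment> \<open>(3) signature (-, \<squnion>)\<close>
   (\<forall>(m::'a \<Rightarrow> 'a \<Rightarrow> 'a) ov.
      (representable_in TX TY [(PMinus, m), (POvr, ov)] \<longrightarrow> minus_alg_ovr (comp_of_minus m) m ov) \<and>
      (minus_alg_ovr (comp_of_minus m) m ov \<longrightarrow>
         representable_in TYPE('a \<times> 'a) TYPE('a) [(PMinus, m), (POvr, ov)]))
   \<and>
  \<comment> \<open>(4) signature (-, \<diamond>)\<close>
   (\<forall>(m::'a \<Rightarrow> 'a \<Rightarrow> 'a) up.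
      (representable_in TX TY [(PMinus, m), (PUpd, up)] \<longrightarrow> minus_alg_upd (comp_of_minus m) m up) \<and>
      (minus_alg_upd (comp_of_minus m) m up \<longrightarrow>
         representable_in TYPE('a \<times> 'a) TYPE('a) [(PMinus, m), (PUpd, up)]))
   \<and>
  \<comment> \<open>(5a) signature (-, \<inter>)\<close>
   (\<forall>(m::'a \<Rightarrow> 'a \<Rightarrow> 'a) i.
      (representable_in TX TY [(PMinus, m), (PInter, i)] \<longrightarrow>
         minus_alg (comp_of_minus m) m \<and> rnb_int (comp_of_minus m) i) \<and>
      (minus_alg (comp_of_minus m) m \<and> rnb_int (comp_of_minus m) i \<longrightarrow>
         representable_in TYPE('a \<times> 'a) TYPE('a) [(PMinus, m), (PInter, i)]))
   \<and>
  \<comment> \<open>(5b) signature (-, \<squnion>, \<inter>)\<close>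
   (\<forall>(m::'a \<Rightarrow> 'a \<Rightarrow> 'a) ov i.
      (representable_in TX TY [(PMinus, m), (POvr, ov), (PInter, i)] \<longrightarrow>
         minus_alg_ovr (comp_of_minus m) m ov \<and> rnb_int (comp_of_minus m) i) \<and>
      (minus_alg_ovr (comp_of_minus m) m ov \<and> rnb_int (comp_of_minus m) i \<longrightarrow>
         representable_in TYPE('a \<times> 'a) TYPE('a) [(PMinus, m), (POvr, ov), (PInter, i)]))
   \<and>
  \<comment> \<open>(5c) signature (-, \<diamond>, \<inter>)\<close>
   (\<forall>(m::'a \<Rightarrow> 'a \<Rightarrow> 'a) up i.
      (representable_in TX TY [(PMinus, m), (PUpd, up), (PInter, i)] \<longrightarrow>
         minus_alg_upd (comp_of_minus m) m up \<and> rnb_int (comp_of_minus m) i) \<and>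
      (minus_alg_upd (comp_of_minus m) m up \<and> rnb_int (comp_of_minus m) i \<longrightarrow>
         representable_in TYPE('a \<times> 'a) TYPE('a) [(PMinus, m), (PUpd, up), (PInter, i)]))
   \<and>
  \<comment> \<open>(6) signature (\<circ>, \<inter>, \<squnion>)\<close>
   (\<forall>(c::'a \<Rightarrow> 'a \<Rightarrow> 'a) i ov.
      (representable_in TX TY [(PRes, c), (PInter, i), (POvr, ov)] \<longrightarrow> rnb_int_ovr c i ov) \<and>
      (rnb_int_ovr c i ov \<longrightarrow>
         representable_in TYPE('a \<times> 'a) TYPE('a) [(PRes, c), (PInter, i), (POvr, ov)]))
   \<and>
  \<comment> \<open>(7) signature (\<circ>, \<inter>, \<diamond>)\<close>
   (\<forall>(c::'a \<Rightarrow> 'a \<Rightarrow> 'a) i up.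
      (representable_in TX TY [(PRes, c), (PInter, i), (PUpd, up)] \<longrightarrow> rnb_int_upd c i up) \<and>
      (rnb_int_upd c i up \<longrightarrow>
         representable_in TYPE('a \<times> 'a) TYPE('a) [(PRes, c), (PInter, i), (PUpd, up)]))"
proof (intro conjI allI impI; (elim conjE representable_inE)?)
qed (blast intro: list.set_intros option_hom_comp_of_minus
      rnb_int_if_embedded rnb_int_ovr_if_embedded rnb_int_upd_if_embedded
      minus_alg_if_embedded minus_alg_ovr_if_embedded minus_alg_upd_if_embedded
      rnb_isect.representable rnb_isect_ovr.representable rnb_isect_upd.representable
      minus_algebra.representable minus_ovr_algebra.representable minus_upd_algebra.representable
      minus_isect.representable minus_ovr_isect.representable minus_upd_isect.representable
      rnb_isect.intro rnb_isect_ovr.intro rnb_isect_upd.intro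
      minus_algebra.intro minus_ovr_algebra.intro minus_upd_algebra.intro
      minus_isect.intro minus_ovr_isect.intro minus_upd_isect.intro)+

end
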